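(* Let $f:\mathbb{T}^2\to\mathbb{T}^2$ be an area preserving non-invertible endomorphism and suppose $U\subset\mathbb{T}^2$ is a regular open set with $f^{-1}(U)=U$. If $U_0$ is a connected component of $U$, then there exists $n\ge1$ such that $f^{-n}(U_0)=U_0$.
   Context: An endomorphism is a local homeomorphism (covering map) $f:\mathbb{T}^2\to\mathbb{T}^2$, $\mathbb{T}^2=\mathbb{R}^2/\mathbb{Z}^2$ with Haar measure $\lambda$; area preserving means $\lambda(f^{-1}(B))=\lambda(B)$ for all Borel $B$; non-invertible means degree at least two. An open set is regular if it equals the interior of its closure. *)

theory Defs
  imports "HOL-Analysis.Analysis"
begin

text \<open>The 2-torus R^2/Z^2, represented by the fundamental domain [0,1)^2,
  with the quotient topology induced by the projection tproj.\<close>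

typedef torus = "{x::real \<times> real. 0 \<le> fst x \<and> fst x < 1 \<and> 0 \<le> snd x \<and> snd x < 1}"
  by (rule exI[of _ "(0,0)"]) auto

definition tproj :: "real \<times> real \<Rightarrow> torus" where
  "tproj x = Abs_torus (frac (fst x), frac (snd x))"

instantiation torus :: topological_space
begin
definition open_torus :: "torus set \<Rightarrow> bool" where
  "open_torus S \<longleftrightarrow> open (tproj -` S)"
instance
proof
  show "open (UNIV :: torus set)" by (simp add: open_torus_def)
next
  fix S T :: "torus set"
  assume "open S" "open T"
  then show "open (S \<inter> T)" by (simp add: open_torus_def open_Int vimage_Int)
next
  fix K :: "torus set set"
  assume "\<forall>S\<in>K. open S"
  then show "open (\<Union>K)" by (auto simp: open_torus_def vimage_Union intro!: open_UN)
qed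
end

definition haar :: "torus measure" where
  "haar = distr (restrict_space lborel
           {x::real \<times> real. 0 \<le> fst x \<and> fst x < 1 \<and> 0 \<le> snd x \<and> snd x < 1}) borel tproj"

definition area_preserving :: "(torus \<Rightarrow> torus) \<Rightarrow> bool" where
  "area_preserving f \<longleftrightarrow> (\<forall>B \<in> sets borel. emeasure haar (f -` B) = emeasure haar B)"

definition endomorphism :: "(torus \<Rightarrow> torus) \<Rightarrow> bool" where
  "endomorphism f \<longleftrightarrow> covering_space UNIV f UNIV"

definition regular_open :: "'a::topological_space set \<Rightarrow> bool" where
  "regular_open U \<longleftrightarrow> U = interior (closure U)"

end

theory Submission
  imports Defs
begin

text \<open>A continuous map \<open>f\<close> with \<open>f -` U = U\<close> sends each component \<open>C\<close> of \<open>U\<close> into a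
  component \<open>g C\<close>, and \<open>C \<subseteq> f -` g C\<close>; since \<open>f\<close> preserves the measure, \<open>\<mu> C \<le> \<mu> (g C)\<close>.
  Components are open, hence of positive measure, so the forward orbit of \<open>U0\<close> under \<open>g\<close>
  cannot consist of infinitely many disjoint components of measure \<open>\<ge> \<mu> U0\<close> and must repeat.
  Two distinct components with the same successor would both lie in its preimage, which has the
  same measure as the successor; this prevents a preperiodic tail.\<close>

lemma (in finite_measure) disjoint_family_measure_lower_bound:
  fixes A :: "nat \<Rightarrow> 'a set"
  assumes "disjoint_family A" "range A \<subseteq> sets M" "\<And>n. c \<le> measure M (A n)"
  shows "c \<le> 0"
proof -
  have "summable (\<lambda>n. measure M (A n))"
    using finite_measure_UNION[OF assms(2,1)] by (rule sums_summable)
  then have "(\<lambda>n. measure M (A n)) \<longlonglongrightarrow> 0"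
    by (rule summable_LIMSEQ_zero)
  then show ?thesis
    using assms(3) by (intro LIMSEQ_le_const) auto
qed

lemma emeasure_lborel_open_pos:
  fixes S :: "'a::euclidean_space set"
  assumes "open S" "S \<noteq> {}"
  shows "0 < emeasure lborel S"
proof -
  obtain x where "x \<in> S" using assms(2) by blast
  then obtain a b where ab: "box a b \<subseteq> S" "\<forall>i\<in>Basis. a \<bullet> i < b \<bullet> i"
    using open_contains_box[OF assms(1)] by metis
  have "0 < emeasure lborel (box a b)"
    using ab(2) by (simp add: emeasure_lborel_box_eq less_imp_le prod_pos inner_diff_left)
  also have "\<dots> \<le> emeasure lborel S"
    using ab(1) assms(1) by (intro emeasure_mono) auto
  finally show ?thesis .
qed

locale component_dynamics = finite_measure M
  for M :: "'a::topological_space measure" +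
  fixes f :: "'a \<Rightarrow> 'a" and U :: "'a set"
  assumes sets_eq_borel: "sets M = sets borel"
    and measure_open_pos: "\<And>T. open T \<Longrightarrow> T \<noteq> {} \<Longrightarrow> 0 < measure M T"
    and continuous_f: "continuous_on UNIV f"
    and measure_vimage_open: "\<And>B. open B \<Longrightarrow> measure M (f -` B) = measure M B"
    and vimage_U: "f -` U = U"
    and open_components_U: "\<And>C. C \<in> components U \<Longrightarrow> open C"
begin

text \<open>The component containing \<open>f ` C\<close>; the choice of a point of \<open>C\<close> is irrelevant
  (\<open>next_component_eq\<close>).\<close>
definition next_component :: "'a set \<Rightarrow> 'a set" where
  "next_component C = connected_component_set U (f (SOME x. x \<in> C))"

lemma measure_component_pos:
  assumes "C \<in> components U"
  shows "0 < measure M C"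
  using assms by (intro measure_open_pos open_components_U) (auto simp: in_components_nonempty)

lemma image_component_subset:
  assumes "C \<in> components U" "x \<in> C"
  shows "f ` C \<subseteq> connected_component_set U (f x)"
proof (rule connected_component_maximal)
  show "f x \<in> f ` C" using assms(2) by blast
  show "connected (f ` C)"
    using assms(1) continuous_f
    by (meson continuous_on_subset connected_continuous_image in_components_connected top_greatest)
  show "f ` C \<subseteq> U"
    using in_components_subset[OF assms(1)] vimage_U by blast
qed

lemma next_component_eq:
  assumes "C \<in> components U" "x \<in> C"
  shows "next_component C = connected_component_set U (f x)"
proof -
  have some: "(SOME x. x \<in> C) \<in> C"
    using assms(2) by (rule someI)
  have "f x \<in> U"
    using assms in_components_subset vimage_U by blast
  moreover have "f (SOME x. x \<in> C) \<in> connected_component_set U (f x)"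
    using image_component_subset[OF assms] some by blast
  ultimately show ?thesis
    unfolding next_component_def by (metis connected_component_eq)
qed

lemma next_component_in_components:
  assumes "C \<in> components U"
  shows "next_component C \<in> components U"
proof -
  obtain x where "x \<in> C"
    using assms in_components_nonempty by blast
  moreover have "f x \<in> U"
    using assms calculation in_components_subset vimage_U by blast
  ultimately show ?thesis
    using assms by (simp add: next_component_eq componentsI)
qed

lemma component_subset_vimage_next_component:
  assumes "C \<in> components U"
  shows "C \<subseteq> f -` next_component C"
  using image_component_subset[OF assms] next_component_eq[OF assms] by blast

lemma measure_vimage_mono:
  assumes "A \<subseteq> f -` B" "open B"
  shows "measure M A \<le> measure M B"
proof -
  have "open (f -` B)"
    using assms(2) continuous_f by (simp add: continuous_on_open_vimage)
  then have "measure M A \<le> measure M (f -` B)"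
    using assms(1) sets_eq_borel by (intro finite_measure_mono) auto
  then show ?thesis
    using measure_vimage_open[OF assms(2)] by simp
qed

lemma measure_le_next_component:
  assumes "C \<in> components U"
  shows "measure M C \<le> measure M (next_component C)"
  using assms by (intro measure_vimage_mono component_subset_vimage_next_component
      open_components_U next_component_in_components)

text \<open>Distinct components with a common successor occupy disjoint parts of its preimage.\<close>
lemma next_component_cancel:
  assumes C: "C \<in> components U" and D: "D \<in> components U"
    and eq: "next_component C = next_component D"
    and le: "measure M (next_component D) \<le> measure M D"
  shows "C = D"
proof (rule ccontr)
  assume "C \<noteq> D"
  then have "C \<inter> D = {}"
    using C D components_nonoverlap by blast
  then have "measure M (C \<union> D) = measure M C + measure M D"
    using C D open_components_U sets_eq_borel by (intro finite_measure_Union) auto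
  moreover have "measure M (C \<union> D) \<le> measure M (next_component D)"
    using C D eq component_subset_vimage_next_component
    by (intro measure_vimage_mono open_components_U next_component_in_components) auto
  moreover have "0 < measure M C"
    using C by (rule measure_component_pos)
  ultimately show False
    using le by linarith
qed

lemma vimage_next_component:
  assumes C: "C \<in> components U"
    and le: "measure M (next_component C) \<le> measure M C"
  shows "f -` next_component C = C"
proof
  show "C \<subseteq> f -` next_component C"
    using C by (rule component_subset_vimage_next_component)
  show "f -` next_component C \<subseteq> C"
  proof
    fix x assume x: "x \<in> f -` next_component C"
    then have "x \<in> U"
      using C next_component_in_components in_components_subset vimage_U by blast
    define D where "D = connected_component_set U x"
    have D: "D \<in> components U" "x \<in> D"
      using \<open>x \<in> U\<close> by (auto simp: D_def componentsI)
    have "next_component C \<in> components U" "f x \<in> next_component C"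
      using C x next_component_in_components by auto
    then have "connected_component_set U (f x) = next_component C"
      by (metis components_iff connected_component_eq)
    then have "D = C"
      using next_component_cancel[OF D(1) C _ le] next_component_eq[OF D] by simp
    then show "x \<in> C"
      using D(2) by simp
  qed
qed

lemma funpow_next_component_in_components:
  assumes "C \<in> components U"
  shows "(next_component ^^ n) C \<in> components U"
  by (induction n) (simp_all add: assms next_component_in_components)

lemma measure_funpow_next_component_mono:
  assumes "C \<in> components U" "m \<le> n"
  shows "measure M ((next_component ^^ m) C) \<le> measure M ((next_component ^^ n) C)"
  by (rule lift_Suc_mono_le[OF _ assms(2)])
    (simp add: measure_le_next_component funpow_next_component_in_components[OF assms(1)])

text \<open>The orbit has measures bounded below by \<open>measure M C > 0\<close>, so it cannot be a disjoint
  family in a finite measure space.\<close>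
lemma funpow_next_component_repeats:
  assumes C: "C \<in> components U"
  obtains i j where "i < j" "(next_component ^^ i) C = (next_component ^^ j) C"
proof -
  let ?W = "\<lambda>n. (next_component ^^ n) C"
  have "\<exists>i j. i < j \<and> ?W i = ?W j"
  proof (rule ccontr)
    assume distinct: "\<not> ?thesis"
    have "disjoint_family ?W"
      unfolding disjoint_family_on_def
    proof (intro ballI impI)
      fix i j :: nat assume "i \<noteq> j"
      then have "?W i \<noteq> ?W j"
        using distinct by (metis linorder_neq_iff)
      then show "?W i \<inter> ?W j = {}"
        using components_nonoverlap funpow_next_component_in_components[OF C] by blast
    qed
    moreover have "range ?W \<subseteq> sets M"
      using open_components_U funpow_next_component_in_components[OF C] sets_eq_borel by auto
    moreover have "measure M C \<le> measure M (?W n)" for n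
      using measure_funpow_next_component_mono[OF C, of 0 n] by simp
    ultimately have "measure M C \<le> 0"
      by (rule disjoint_family_measure_lower_bound)
    then show False
      using measure_component_pos[OF C] by simp
  qed
  then show thesis
    using that by blast
qed

lemma funpow_next_component_periodic:
  assumes C: "C \<in> components U"
  obtains p where "p \<ge> 1" "(next_component ^^ p) C = C"
proof -
  let ?W = "\<lambda>n. (next_component ^^ n) C"
  have "?W 0 = ?W (j - i)" if "i < j" "?W i = ?W j" for i j
    using that
  proof (induction i arbitrary: j)
    case (Suc i)
    then obtain j' where j': "j = Suc j'" "i < j'"
      by (cases j) auto
    have "measure M (next_component (?W i)) \<le> measure M (?W j')"
      using Suc.prems j' measure_funpow_next_component_mono[OF C, of "Suc i" j'] by simp
    then have "?W i = ?W j'"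
      using Suc.prems j' funpow_next_component_in_components[OF C]
      by (intro next_component_cancel[of "?W i" "?W j'"]) auto
    then show ?case
      using Suc.IH[of j'] j' by simp
  qed simp
  moreover obtain i j where "i < j" "?W i = ?W j"
    using C by (rule funpow_next_component_repeats)
  ultimately show thesis
    using that[of "j - i"] by simp
qed

theorem component_periodic:
  assumes C: "C \<in> components U"
  obtains p where "p \<ge> 1" "(f ^^ p) -` C = C"
proof -
  let ?W = "\<lambda>n. (next_component ^^ n) C"
  obtain p where p: "p \<ge> 1" "?W p = C"
    using C by (rule funpow_next_component_periodic)
  have "?W (k + p) = ?W k" for k
    using p(2) by (simp add: funpow_add)
  then have vimage_orbit: "f -` next_component (?W k) = ?W k" for k
    using measure_funpow_next_component_mono[OF C, of "Suc k" "k + p"] p(1)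
    by (intro vimage_next_component funpow_next_component_in_components[OF C]) simp_all
  have "(f ^^ k) -` ?W k = C" for k
  proof (induction k)
    case (Suc k)
    have "(f ^^ Suc k) -` ?W (Suc k) = (f ^^ k) -` (f -` next_component (?W k))"
      by (simp add: vimage_comp)
    also have "\<dots> = C"
      using Suc vimage_orbit by simp
    finally show ?case .
  qed simp
  then show thesis
    using that[OF p(1)] p(2) by metis
qed

end

abbreviation unit_square :: "(real \<times> real) set" where
  "unit_square \<equiv> {x. 0 \<le> fst x \<and> fst x < 1 \<and> 0 \<le> snd x \<and> snd x < 1}"

lemma tproj_eq_iff:
  "tproj a = tproj b \<longleftrightarrow> (\<exists>m n::int. a = b + (of_int m, of_int n))"
proof
  assume "tproj a = tproj b"
  then have "frac (fst a) = frac (fst b)" "frac (snd a) = frac (snd b)"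
    unfolding tproj_def by (auto simp: Abs_torus_inject frac_lt_1)
  then obtain m n where "fst a = fst b + of_int m" "snd a = snd b + of_int n"
    by (metis frac_eqE)
  then show "\<exists>m n::int. a = b + (of_int m, of_int n)"
    by (simp add: prod_eq_iff)
next
  assume "\<exists>m n::int. a = b + (of_int m, of_int n)"
  then show "tproj a = tproj b"
    unfolding tproj_def by auto
qed

lemma tproj_unit_square:
  assumes "x \<in> unit_square"
  shows "tproj x = Abs_torus x"
  using assms by (simp add: tproj_def frac_eq)

lemma surj_tproj: "surj tproj"
proof (rule surjI)
  fix t :: torus
  obtain x where "t = Abs_torus x" "x \<in> unit_square"
    by (rule Abs_torus_cases)
  then show "tproj (Rep_torus t) = t"
    by (simp add: Abs_torus_inverse tproj_unit_square)
qed

lemma continuous_on_tproj: "continuous_on UNIV tproj"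
  by (simp add: continuous_on_open_vimage open_torus_def)

lemma open_tproj_image:
  assumes "open B"
  shows "open (tproj ` B)"
proof -
  let ?shift = "\<lambda>m n x. (of_int m, of_int n) + x"
  have "tproj -` tproj ` B = (\<Union>m::int. \<Union>n::int. ?shift m n ` B)"
  proof (intro set_eqI iffI)
    fix z assume "z \<in> tproj -` tproj ` B"
    then obtain w m n where "w \<in> B" "z = ?shift m n w"
      by (auto simp: tproj_eq_iff add.commute)
    then show "z \<in> (\<Union>m::int. \<Union>n::int. ?shift m n ` B)"
      by blast
  next
    fix z assume "z \<in> (\<Union>m::int. \<Union>n::int. ?shift m n ` B)"
    then obtain w m n where "w \<in> B" "z = ?shift m n w"
      by blast
    then have "tproj z = tproj w" "w \<in> B"
      by (auto simp: tproj_eq_iff add.commute)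
    then show "z \<in> tproj -` tproj ` B"
      by (metis imageI vimageI)
  qed
  moreover have "open (\<Union>m::int. \<Union>n::int. ?shift m n ` B)"
    using assms by (intro open_UN ballI open_translation)
  ultimately show ?thesis
    by (simp add: open_torus_def)
qed

lemma locally_connected_torus: "locally connected (UNIV :: torus set)"
  unfolding locally_def
proof (intro allI impI)
  fix W :: "torus set" and x
  assume "openin (top_of_set UNIV) W \<and> x \<in> W"
  then have W: "open W" "x \<in> W" by auto
  obtain a where a: "tproj a = x"
    using surj_tproj by (metis surjD)
  have "open (tproj -` W)"
    using W(1) by (simp add: open_torus_def)
  then obtain r where "r > 0" "ball a r \<subseteq> tproj -` W"
    using W(2) a by (meson open_contains_ball vimageI)
  moreover have "connected (tproj ` ball a r)"
    using continuous_on_tproj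
    by (meson connected_ball connected_continuous_image continuous_on_subset top_greatest)
  ultimately show "\<exists>U V. openin (top_of_set UNIV) U \<and> connected V \<and> x \<in> U \<and> U \<subseteq> V \<and> V \<subseteq> W"
    using a by (intro exI[of _ "tproj ` ball a r"]) (auto simp: open_tproj_image)
qed

lemma unit_square_borel: "unit_square \<in> sets borel"
proof -
  have "unit_square = {0..<1} \<times> {0..<1}"
    by auto
  then show ?thesis
    by (simp add: borel_prod[symmetric])
qed

lemma emeasure_haar:
  assumes "A \<in> sets borel"
  shows "emeasure haar A = emeasure lborel (tproj -` A \<inter> unit_square)"
proof -
  have "unit_square \<in> sets lborel"
    using unit_square_borel by simp
  moreover have "tproj \<in> borel_measurable (restrict_space lborel unit_square)"
    by (rule measurable_restrict_space1)
      (simp add: borel_measurable_continuous_onI continuous_on_tproj)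
  ultimately show ?thesis
    unfolding haar_def using assms by (simp add: emeasure_distr emeasure_restrict_space)
qed

lemma finite_measure_haar: "finite_measure haar"
proof
  have "bounded unit_square"
    by (rule bounded_subset[OF bounded_cbox[of "(0, 0)" "(1, 1)"]]) (auto simp: cbox_Pair_eq)
  moreover have "space haar = UNIV"
    by (simp add: haar_def)
  ultimately show "emeasure haar (space haar) \<noteq> \<infinity>"
    using emeasure_haar[of UNIV] emeasure_bounded_finite[of unit_square] by simp
qed

lemma emeasure_haar_open_pos:
  assumes "open T" "T \<noteq> {}"
  shows "0 < emeasure haar T"
proof -
  obtain t where "t \<in> T"
    using assms(2) by blast
  obtain y where "t = Abs_torus y" "y \<in> unit_square"
    by (rule Abs_torus_cases)
  then have y: "tproj y \<in> T" "y \<in> unit_square"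
    using \<open>t \<in> T\<close> by (simp_all add: tproj_unit_square)
  let ?B = "{fst y<..<1} \<times> {snd y<..<1}"
  have "open ?B" "?B \<subseteq> unit_square"
    using y(2) by (auto intro: open_Times)
  have "open (tproj -` T)"
    using assms(1) by (simp add: open_torus_def)
  moreover have "y \<in> closure ?B"
    using y(2) by (auto simp: closure_Times mem_Times_iff)
  ultimately have "tproj -` T \<inter> ?B \<noteq> {}"
    using y(1) open_Int_closure_eq_empty by blast
  then have "0 < emeasure lborel (tproj -` T \<inter> ?B)"
    using \<open>open (tproj -` T)\<close> \<open>open ?B\<close> by (intro emeasure_lborel_open_pos) auto
  also have "\<dots> \<le> emeasure lborel (tproj -` T \<inter> unit_square)"
    using \<open>?B \<subseteq> unit_square\<close> \<open>open (tproj -` T)\<close> unit_square_borel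
    by (intro emeasure_mono) auto
  also have "\<dots> = emeasure haar T"
    using assms by (simp add: emeasure_haar)
  finally show ?thesis .
qed

theorem lemma5:
  fixes f :: "torus \<Rightarrow> torus" and U U0 :: "torus set"
  assumes "endomorphism f"
    and "area_preserving f"
    and "\<not> inj f"
    and "regular_open U"
    and "f -` U = U"
    and "U0 \<in> components U"
  shows "\<exists>n::nat. n \<ge> 1 \<and> (f ^^ n) -` U0 = U0"
proof -
  interpret haar: finite_measure haar
    by (rule finite_measure_haar)
  interpret component_dynamics haar f U
  proof
    show "sets haar = sets borel"
      by (simp add: haar_def)
    show "0 < measure haar T" if "open T" "T \<noteq> {}" for T
      using emeasure_haar_open_pos[OF that] haar.emeasure_eq_measure by simp
    show "continuous_on UNIV f"
      using assms(1) unfolding endomorphism_def by (rule covering_space_imp_continuous)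
    show "measure haar (f -` B) = measure haar B" if "open B" for B
      using assms(2) that unfolding area_preserving_def measure_def by simp
    have "open U"
      using assms(4) unfolding regular_open_def by (metis open_interior)
    then show "open C" if "C \<in> components U" for C
      using locally_connected_torus that by (simp add: locally_connected_open_component)
  qed (fact assms(5))
  obtain p where "p \<ge> 1" "(f ^^ p) -` U0 = U0"
    using assms(6) by (rule component_periodic)
  then show ?thesis
    by blast
qed

end
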